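(* Under the standing assumptions of the context, for each fixed $l\ge l_0$ and any real $a<b$, $$\sup_{\omega\in[a,b]}\Big|S_l(\omega)-\Big(\prod_{j=1}^{n}m_l(\omega2^{-j})\Big)'\Big|\longrightarrow0\quad(n\to\infty),$$ where $S_l(\omega):=\sum_{j_0=1}^{\infty}2^{-j_0}m_l'(\omega2^{-j_0})\prod_{j\ge1,\,j\ne j_0}m_l(\omega2^{-j})$.
   Context: Let $\theta$ be odd, non-decreasing, $C^2$, with $\theta(\omega)=\pi/4$ for $\omega>\pi/3$; fix $\pi/3\le\omega_0<\pi/2$. Meyer scaling function (Fourier transform): $\widehat{\varphi^M}(\omega)=1$ for $|\omega|\le2\omega_0$, $=\cos(\frac\pi4+\theta(\frac{\pi}{3(\pi-2\omega_0)}(|\omega|-\pi)))$ for $2\omega_0<|\omega|\le2\pi-2\omega_0$, $=0$ otherwise. Meyer mask: $2\pi$-periodic $m^M$ with $m^M(\omega)=\widehat{\varphi^M}(2\omega)$ on $[-\pi,\pi]$. $\|\cdot\|_C$: sup norm on $[-\pi,\pi]$. A linear method of summation $(\lambda_{n,k})$ maps $f$ with Fourier coefficients $a_k,b_k$ to $u_n(f,\omega)=\frac{a_0}2+\sum_{k=1}^n\lambda_{n,k}(a_k\cos k\omega+b_k\sin k\omega)$. $m^M_l:=m^M/(\cos\frac\omega2)^{2l}$. Standing assumptions: a method and a sequence $n(l)$ are fixed with $u_l:=u_{n(l)}(m^M_l,\cdot)$, $u_{1,l}:=u_{n(l)}((m^M_l)',\cdot)$ satisfying $\|u_l-m^M_l\|_C=o(l^{-1})$,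 $\|u_{1,l}-(m^M_l)'\|_C=o(1)$, $u_l(\pi)\ne0$; $l_0$ is fixed with $\inf_{l\ge l_0}|u_l(0)|>0$. $m_l(\omega):=(\cos\frac\omega2)^{2l}u_l(\omega)/u_l(0)$ (a trigonometric polynomial with $m_l(0)=1$). *)

theory Defs
  imports "HOL-Analysis.Analysis"
begin

definition C2 :: "(real \<Rightarrow> real) \<Rightarrow> bool" where
  "C2 f \<longleftrightarrow> (\<exists>f' f''. (\<forall>x. (f has_real_derivative f' x) (at x)) \<and>
                       (\<forall>x. (f' has_real_derivative f'' x) (at x)) \<and> continuous_on UNIV f'')"

text \<open>Fourier transform of the Meyer scaling function.\<close>
definition phiM :: "(real \<Rightarrow> real) \<Rightarrow> real \<Rightarrow> real \<Rightarrow> real" where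
  "phiM \<theta> \<omega>0 \<omega> =
     (if \<bar>\<omega>\<bar> \<le> 2 * \<omega>0 then 1
      else if \<bar>\<omega>\<bar> \<le> 2 * pi - 2 * \<omega>0 then
        cos (pi / 4 + \<theta> (pi / (3 * (pi - 2 * \<omega>0)) * (\<bar>\<omega>\<bar> - pi)))
      else 0)"

definition red2pi :: "real \<Rightarrow> real" where
  "red2pi \<omega> = \<omega> - 2 * pi * of_int \<lfloor>(\<omega> + pi) / (2 * pi)\<rfloor>"

text \<open>Meyer mask: 2 pi-periodic, equal to phiM(2 omega) on [-pi,pi]
  (at the endpoints both values are 0, so the choice [-pi,pi) is harmless).\<close>
definition mM :: "(real \<Rightarrow> real) \<Rightarrow> real \<Rightarrow> real \<Rightarrow> real" where
  "mM \<theta> \<omega>0 \<omega> = phiM \<theta> \<omega>0 (2 * red2pi \<omega>)"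

definition mMl :: "(real \<Rightarrow> real) \<Rightarrow> real \<Rightarrow> nat \<Rightarrow> real \<Rightarrow> real" where
  "mMl \<theta> \<omega>0 l \<omega> = mM \<theta> \<omega>0 \<omega> / (cos (\<omega> / 2)) ^ (2 * l)"

definition supC :: "(real \<Rightarrow> real) \<Rightarrow> real" where
  "supC f = (SUP \<omega>\<in>{-pi..pi}. \<bar>f \<omega>\<bar>)"

definition fa :: "(real \<Rightarrow> real) \<Rightarrow> nat \<Rightarrow> real" where
  "fa f k = integral {-pi..pi} (\<lambda>x. f x * cos (real k * x)) / pi"

definition fb :: "(real \<Rightarrow> real) \<Rightarrow> nat \<Rightarrow> real" where
  "fb f k = integral {-pi..pi} (\<lambda>x. f x * sin (real k * x)) / pi"

definition usum :: "(nat \<Rightarrow> nat \<Rightarrow> real) \<Rightarrow> nat \<Rightarrow> (real \<Rightarrow> real) \<Rightarrow> real \<Rightarrow> real" where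
  "usum lam n f \<omega> = fa f 0 / 2 +
     (\<Sum>k=1..n. lam n k * (fa f k * cos (real k * \<omega>) + fb f k * sin (real k * \<omega>)))"

definition ul :: "(real \<Rightarrow> real) \<Rightarrow> real \<Rightarrow> (nat \<Rightarrow> nat \<Rightarrow> real) \<Rightarrow> (nat \<Rightarrow> nat) \<Rightarrow> nat \<Rightarrow> real \<Rightarrow> real" where
  "ul \<theta> \<omega>0 lam nl l = usum lam (nl l) (mMl \<theta> \<omega>0 l)"

definition u1l :: "(real \<Rightarrow> real) \<Rightarrow> real \<Rightarrow> (nat \<Rightarrow> nat \<Rightarrow> real) \<Rightarrow> (nat \<Rightarrow> nat) \<Rightarrow> nat \<Rightarrow> real \<Rightarrow> real" where
  "u1l \<theta> \<omega>0 lam nl l = usum lam (nl l) (deriv (mMl \<theta> \<omega>0 l))"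

definition ml :: "(real \<Rightarrow> real) \<Rightarrow> real \<Rightarrow> (nat \<Rightarrow> nat \<Rightarrow> real) \<Rightarrow> (nat \<Rightarrow> nat) \<Rightarrow> nat \<Rightarrow> real \<Rightarrow> real" where
  "ml \<theta> \<omega>0 lam nl l \<omega> = (cos (\<omega> / 2)) ^ (2 * l) * ul \<theta> \<omega>0 lam nl l \<omega> / ul \<theta> \<omega>0 lam nl l 0"

text \<open>S_l(omega) = sum_{j0>=1} 2^{-j0} m_l'(omega 2^{-j0}) prod_{j>=1, j<>j0} m_l(omega 2^{-j});
  indices shifted by one (j = i+1).\<close>
definition Sl :: "(real \<Rightarrow> real) \<Rightarrow> real \<Rightarrow> (nat \<Rightarrow> nat \<Rightarrow> real) \<Rightarrow> (nat \<Rightarrow> nat) \<Rightarrow> nat \<Rightarrow> real \<Rightarrow> real" where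
  "Sl \<theta> \<omega>0 lam nl l \<omega> =
     (\<Sum>i0. (1 / 2 ^ (i0 + 1)) * deriv (ml \<theta> \<omega>0 lam nl l) (\<omega> / 2 ^ (i0 + 1)) *
            (\<Prod>i. if i = i0 then 1 else ml \<theta> \<omega>0 lam nl l (\<omega> / 2 ^ (i + 1))))"

end

theory Submission
  imports Defs
begin

text \<open>Of the standing assumptions only \<open>u\<^sub>l(0) \<noteq> 0\<close> is used: it makes \<open>m\<^sub>l\<close> a \<open>C\<^sup>1\<close> function with
  \<open>m\<^sub>l(0) = 1\<close>, and the convergence holds for every such function \<open>m\<close>. If \<open>|m'| \<le> K\<close>
  on \<open>[-R, R]\<close> and \<open>|\<omega>| \<le> R\<close>, the mean value theorem puts the factor \<open>m(\<omega> 2\<^sup>-\<^sup>j)\<close> within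
  \<open>K R 2\<^sup>-\<^sup>j\<close> of \<open>1\<close>. Comparing with \<open>\<Prod>(1 + K R 2\<^sup>-\<^sup>j) \<le> exp (K R)\<close>, every product with one factor
  removed converges, is bounded by \<open>exp (K R)\<close>, and differs from its \<open>n\<close>-th partial product by at
  most \<open>exp (K R) (exp (K R 2\<^sup>-\<^sup>n) - 1)\<close>. The derivative of the finite product is the finite
  analogue of \<open>S\<^sub>l\<close>, so the difference is bounded uniformly on \<open>[a, b]\<close> by
  \<open>K exp (K R) (2\<^sup>-\<^sup>n + exp (K R 2\<^sup>-\<^sup>n) - 1) \<rightarrow> 0\<close>.\<close>

lemma abs_prod_minus1_le_exp_sum:
  fixes h e :: "nat \<Rightarrow> real"
  assumes "\<And>i. i \<in> A \<Longrightarrow> \<bar>h i - 1\<bar> \<le> e i"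
  shows "\<bar>(\<Prod>i\<in>A. h i) - 1\<bar> \<le> exp (\<Sum>i\<in>A. e i) - 1"
proof (cases "finite A")
  case True
  have "\<bar>(\<Prod>i\<in>A. 1 + (h i - 1)) - 1\<bar> \<le> (\<Prod>i\<in>A. 1 + \<bar>h i - 1\<bar>) - 1"
    using norm_prod_minus1_le_prod_minus1[of "\<lambda>i. h i - 1" A] by simp
  also have "\<dots> \<le> (\<Prod>i\<in>A. exp (e i)) - 1"
    using assms by (smt (verit) exp_ge_add_one_self abs_ge_zero prod_mono)
  finally show ?thesis by (simp add: exp_sum True)
qed simp

lemma convergent_prod_if_abs_minus1_le:
  fixes h e :: "nat \<Rightarrow> real"
  assumes "\<And>i. \<bar>h i - 1\<bar> \<le> e i" "summable e"
  shows "convergent_prod h"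
proof -
  have "summable (\<lambda>i. norm (h i - 1))"
    using assms by (intro summable_comparison_test'[OF assms(2)]) auto
  then show ?thesis
    by (intro abs_convergent_prod_imp_convergent_prod summable_imp_abs_convergent_prod)
qed

lemma abs_prod_le_exp_suminf:
  fixes h e :: "nat \<Rightarrow> real"
  assumes he: "\<And>i. \<bar>h i - 1\<bar> \<le> e i" and e: "summable e"
  shows "\<bar>\<Prod>i<n. h i\<bar> \<le> exp (suminf e)"
proof -
  have "\<bar>\<Prod>i<n. h i\<bar> \<le> exp (\<Sum>i<n. e i)"
    using abs_prod_minus1_le_exp_sum[of "{..<n}" h e] he by fastforce
  also have "\<dots> \<le> exp (suminf e)"
    using sum_le_suminf[OF e, of "{..<n}"] order_trans[OF abs_ge_zero he] by simp
  finally show ?thesis .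
qed

lemma tendsto_prod_lessThan_prodinf:
  fixes h e :: "nat \<Rightarrow> real"
  assumes "\<And>i. \<bar>h i - 1\<bar> \<le> e i" "summable e"
  shows "(\<lambda>N. \<Prod>i<N. h i) \<longlonglongrightarrow> prodinf h"
  by (intro has_prod_imp_tendsto' convergent_prod_has_prod convergent_prod_if_abs_minus1_le[OF assms])

lemma abs_prodinf_le:
  fixes h e :: "nat \<Rightarrow> real"
  assumes "\<And>i. \<bar>h i - 1\<bar> \<le> e i" "summable e"
  shows "\<bar>prodinf h\<bar> \<le> exp (suminf e)"
  by (rule LIMSEQ_le_const2[OF tendsto_rabs[OF tendsto_prod_lessThan_prodinf[OF assms]]])
    (use abs_prod_le_exp_suminf[OF assms] in blast)

lemma abs_prodinf_minus_prod_le: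
  fixes h e :: "nat \<Rightarrow> real"
  assumes he: "\<And>i. \<bar>h i - 1\<bar> \<le> e i" and e: "summable e"
  shows "\<bar>prodinf h - (\<Prod>i<n. h i)\<bar> \<le> exp (suminf e) * (exp (\<Sum>k. e (k + n)) - 1)"
proof (rule LIMSEQ_le_const2)
  show "(\<lambda>N. \<bar>(\<Prod>i<N. h i) - (\<Prod>i<n. h i)\<bar>) \<longlonglongrightarrow> \<bar>prodinf h - (\<Prod>i<n. h i)\<bar>"
    by (intro tendsto_intros tendsto_prod_lessThan_prodinf[OF he e])
  show "\<exists>N0. \<forall>N\<ge>N0. \<bar>(\<Prod>i<N. h i) - (\<Prod>i<n. h i)\<bar> \<le> exp (suminf e) * (exp (\<Sum>k. e (k + n)) - 1)"
  proof (intro exI allI impI)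
    fix N assume "n \<le> N"
    then have split: "(\<Prod>i<N. h i) - (\<Prod>i<n. h i) = (\<Prod>i<n. h i) * ((\<Prod>i\<in>{n..<N}. h i) - 1)"
      by (simp add: right_diff_distrib prod.atLeastLessThan_concat flip: atLeast0LessThan)
    have "(\<Sum>i\<in>{n..<N}. e i) = (\<Sum>k<N - n. e (k + n))"
      using sum.shift_bounds_nat_ivl[of e 0 n "N - n"] \<open>n \<le> N\<close> by (simp add: atLeast0LessThan add.commute)
    also have "\<dots> \<le> (\<Sum>k. e (k + n))"
      using sum_le_suminf[OF summable_ignore_initial_segment[OF e], of "{..<N - n}"]
        order_trans[OF abs_ge_zero he] by simp
    finally have "\<bar>(\<Prod>i\<in>{n..<N}. h i) - 1\<bar> \<le> exp (\<Sum>k. e (k + n)) - 1"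
      using abs_prod_minus1_le_exp_sum[of "{n..<N}" h e] he
      by (meson diff_right_mono exp_le_cancel_iff order_trans)
    then have "\<bar>\<Prod>i<n. h i\<bar> * \<bar>(\<Prod>i\<in>{n..<N}. h i) - 1\<bar> \<le> exp (suminf e) * (exp (\<Sum>k. e (k + n)) - 1)"
      using abs_prod_le_exp_suminf[OF he e] by (intro mult_mono) auto
    then show "\<bar>(\<Prod>i<N. h i) - (\<Prod>i<n. h i)\<bar> \<le> exp (suminf e) * (exp (\<Sum>k. e (k + n)) - 1)"
      unfolding split abs_mult .
  qed
qed

lemma sums_dyadic_tail: "(\<lambda>k. C / 2 ^ (k + n + 1)) sums (C / 2 ^ n :: real)"
proof -
  have "(\<lambda>k. C / 2 ^ (n + 1) * (1 / 2) ^ k) sums (C / 2 ^ (n + 1) * (1 / (1 - 1 / 2)))"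
    by (intro sums_mult geometric_sums) simp
  moreover have "C / 2 ^ (n + 1) * (1 / 2) ^ k = C / 2 ^ (k + n + 1)" for k
    by (simp add: power_add power_divide)
  ultimately show ?thesis
    by simp
qed

lemma dyadically_bounded_series:
  fixes f :: "nat \<Rightarrow> real"
  assumes f: "\<And>i. \<bar>f i\<bar> \<le> C / 2 ^ (i + 1)"
  shows "summable f" "\<bar>\<Sum>k. f (k + n)\<bar> \<le> C / 2 ^ n"
proof -
  show "summable f"
    by (rule summable_comparison_test'[OF sums_summable[OF sums_dyadic_tail[of C 0]]]) (use f in simp)
  have "norm (\<Sum>k. f (k + n)) \<le> (\<Sum>k. C / 2 ^ (k + n + 1))"
  proof (rule norm_suminf_le)
    show "norm (f (k + n)) \<le> C / 2 ^ (k + n + 1)" for k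
      using f[of "k + n"] by simp
    show "summable (\<lambda>k. C / 2 ^ (k + n + 1))"
      by (rule sums_summable[OF sums_dyadic_tail])
  qed
  then show "\<bar>\<Sum>k. f (k + n)\<bar> \<le> C / 2 ^ n"
    using sums_unique[OF sums_dyadic_tail] by simp
qed

lemma sum_dyadic_weights_le_one: "(\<Sum>i<n. 1 / 2 ^ (i + 1)) \<le> (1::real)"
  using sum_le_suminf[OF sums_summable[OF sums_dyadic_tail[of 1 0]], of "{..<n}"]
    sums_unique[OF sums_dyadic_tail[of 1 0]] by simp

lemma dyadic_series_approx:
  fixes a P p :: "nat \<Rightarrow> real"
  assumes a: "\<And>i. \<bar>a i\<bar> \<le> K / 2 ^ (i + 1)" and P: "\<And>i. \<bar>P i\<bar> \<le> B"
    and p: "\<And>i. \<bar>P i - p i\<bar> \<le> \<epsilon>"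
  shows "\<bar>(\<Sum>i. a i * P i) - (\<Sum>i<n. a i * p i)\<bar> \<le> K * B / 2 ^ n + K * \<epsilon>"
proof -
  have "0 \<le> K / 2 ^ (0 + 1)"
    by (rule order_trans[OF abs_ge_zero a])
  then have K: "0 \<le> K"
    by simp
  have aP: "\<bar>a i * P i\<bar> \<le> K * B / 2 ^ (i + 1)" for i
  proof -
    have "\<bar>a i\<bar> * \<bar>P i\<bar> \<le> K / 2 ^ (i + 1) * B"
      by (rule mult_mono[OF a P]) (use K in auto)
    then show ?thesis
      by (simp add: abs_mult)
  qed
  have "(\<Sum>i. a i * P i) = (\<Sum>k. a (k + n) * P (k + n)) + (\<Sum>i<n. a i * P i)"
    by (rule suminf_split_initial_segment[OF dyadically_bounded_series(1)[OF aP]])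
  then have split: "(\<Sum>i. a i * P i) - (\<Sum>i<n. a i * p i)
      = (\<Sum>k. a (k + n) * P (k + n)) + (\<Sum>i<n. a i * (P i - p i))"
    by (simp add: right_diff_distrib sum_subtractf)
  have tail: "\<bar>\<Sum>k. a (k + n) * P (k + n)\<bar> \<le> K * B / 2 ^ n"
    by (rule dyadically_bounded_series(2)[OF aP])
  have "\<bar>\<Sum>i<n. a i * (P i - p i)\<bar> \<le> (\<Sum>i<n. K / 2 ^ (i + 1) * \<epsilon>)"
    using mult_mono[OF a p] K by (intro sum_abs[THEN order_trans] sum_mono) (auto simp: abs_mult)
  also have "\<dots> = (\<Sum>i<n. 1 / 2 ^ (i + 1)) * (K * \<epsilon>)"
    by (simp add: sum_distrib_right)
  also have "\<dots> \<le> 1 * (K * \<epsilon>)"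
    using sum_dyadic_weights_le_one K order_trans[OF abs_ge_zero p] by (intro mult_right_mono) simp_all
  finally have head: "\<bar>\<Sum>i<n. a i * (P i - p i)\<bar> \<le> K * \<epsilon>"
    by simp
  show ?thesis
    unfolding split using tail head by linarith
qed

lemma has_real_derivative_dilated_prod:
  fixes m m' :: "real \<Rightarrow> real"
  assumes "\<And>x. (m has_real_derivative m' x) (at x)"
  shows "((\<lambda>x. \<Prod>j=1..n. m (x / 2 ^ j)) has_real_derivative
      (\<Sum>i<n. 1 / 2 ^ (i + 1) * m' (\<omega> / 2 ^ (i + 1)) *
         (\<Prod>k<n. if k = i then 1 else m (\<omega> / 2 ^ (k + 1))))) (at \<omega>)"
proof -
  have prod_shift: "(\<Prod>j=1..n. m (x / 2 ^ j)) = (\<Prod>i<n. m (x / 2 ^ (i + 1)))" for x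
    by (simp add: prod.atLeast1_atMost_eq)
  have remove: "(\<Prod>k\<in>{..<n}-{i}. m (\<omega> / 2 ^ (k + 1))) = (\<Prod>k<n. if k = i then 1 else m (\<omega> / 2 ^ (k + 1)))"
    if "i < n" for i
    using that by (simp add: prod.If_cases Int_Diff lessThan_iff Diff_eq flip: Collect_neg_eq)
  have "((\<lambda>x. \<Prod>i<n. m (x / 2 ^ (i + 1))) has_real_derivative
      (\<Sum>i<n. m' (\<omega> / 2 ^ (i + 1)) * (1 / 2 ^ (i + 1)) * (\<Prod>k\<in>{..<n}-{i}. m (\<omega> / 2 ^ (k + 1))))) (at \<omega>)"
    by (intro has_field_derivative_prod DERIV_chain2[OF assms]) (auto intro!: derivative_eq_intros)
  also have "(\<Sum>i<n. m' (\<omega> / 2 ^ (i + 1)) * (1 / 2 ^ (i + 1)) * (\<Prod>k\<in>{..<n}-{i}. m (\<omega> / 2 ^ (k + 1))))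
      = (\<Sum>i<n. 1 / 2 ^ (i + 1) * m' (\<omega> / 2 ^ (i + 1)) * (\<Prod>k<n. if k = i then 1 else m (\<omega> / 2 ^ (k + 1))))"
    by (intro sum.cong refl) (simp only: lessThan_iff remove mult_ac)
  finally show ?thesis
    unfolding prod_shift .
qed

lemma abs_dilate_le:
  fixes x R :: real
  assumes "\<bar>x\<bar> \<le> R"
  shows "\<bar>x / 2 ^ k\<bar> \<le> R / 2 ^ k" "\<bar>x / 2 ^ k\<bar> \<le> R"
proof -
  show *: "\<bar>x / 2 ^ k\<bar> \<le> R / 2 ^ k"
    using assms by (simp add: abs_divide divide_right_mono)
  have "R / 2 ^ k \<le> R"
    using divide_left_mono[of 1 "2 ^ k" R] assms one_le_power[of "2::real" k] by simp
  with * show "\<bar>x / 2 ^ k\<bar> \<le> R"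
    by (rule order_trans)
qed

lemma abs_dilate_minus1_le:
  fixes m m' :: "real \<Rightarrow> real"
  assumes d: "\<And>x. (m has_real_derivative m' x) (at x)" and m0: "m 0 = 1"
    and K: "\<And>x. \<bar>x\<bar> \<le> R \<Longrightarrow> \<bar>m' x\<bar> \<le> K" and \<omega>: "\<bar>\<omega>\<bar> \<le> R"
  shows "\<bar>m (\<omega> / 2 ^ k) - 1\<bar> \<le> K * R / 2 ^ k"
proof -
  have R0: "0 \<le> R"
    using \<omega> by linarith
  have K0: "0 \<le> K"
    using K[of 0] R0 abs_ge_zero[of "m' 0"] by simp
  have "norm (m y - m 0) \<le> K * norm (y - 0)" if "y \<in> {-R..R}" for y
  proof (rule field_differentiable_bound[where S = "{-R..R}" and f' = m'])
    show "(m has_field_derivative m' z) (at z within {-R..R})" for z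
      by (rule has_field_derivative_at_within[OF d])
    show "norm (m' z) \<le> K" if "z \<in> {-R..R}" for z
      using K that by (simp add: abs_le_iff)
  qed (use R0 that in auto)
  then have "\<bar>m y - 1\<bar> \<le> K * \<bar>y\<bar>" if "\<bar>y\<bar> \<le> R" for y
    using that m0 by (simp add: abs_le_iff)
  then have "\<bar>m (\<omega> / 2 ^ k) - 1\<bar> \<le> K * \<bar>\<omega> / 2 ^ k\<bar>"
    using abs_dilate_le(2)[OF \<omega>] by blast
  also have "\<dots> \<le> K * (R / 2 ^ k)"
    using abs_dilate_le(1)[OF \<omega>] K0 by (rule mult_left_mono)
  finally show ?thesis
    by simp
qed

lemma dilated_product_deriv_estimate:
  fixes m m' :: "real \<Rightarrow> real"
  assumes d: "\<And>x. (m has_real_derivative m' x) (at x)" and m0: "m 0 = 1"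
    and K: "\<And>x. \<bar>x\<bar> \<le> R \<Longrightarrow> \<bar>m' x\<bar> \<le> K" and \<omega>: "\<bar>\<omega>\<bar> \<le> R"
  shows "\<bar>(\<Sum>i0. 1 / 2 ^ (i0 + 1) * deriv m (\<omega> / 2 ^ (i0 + 1)) *
            (\<Prod>i. if i = i0 then 1 else m (\<omega> / 2 ^ (i + 1))))
          - deriv (\<lambda>x. \<Prod>j=1..n. m (x / 2 ^ j)) \<omega>\<bar>
         \<le> K * exp (K * R) / 2 ^ n + K * (exp (K * R) * (exp (K * R / 2 ^ n) - 1))"
proof -
  define G where "G i0 = (\<lambda>i. if i = i0 then 1 else m (\<omega> / 2 ^ (i + 1)))" for i0 :: nat
  define e where "e i = K * R / 2 ^ (i + 1)" for i :: nat
  have deriv_m: "deriv m = m'"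
    using DERIV_imp_deriv[OF d] by (rule ext)
  have G: "\<bar>G i0 i - 1\<bar> \<le> e i" for i0 i
  proof -
    have m_i: "\<bar>m (\<omega> / 2 ^ (i + 1)) - 1\<bar> \<le> e i"
      unfolding e_def by (rule abs_dilate_minus1_le[OF d m0 K \<omega>])
    then show ?thesis
      using order_trans[OF abs_ge_zero m_i] by (cases "i = i0") (simp_all add: G_def)
  qed
  have e_sums: "(\<lambda>k. e (k + n')) sums (K * R / 2 ^ n')" for n'
    unfolding e_def by (rule sums_dyadic_tail)
  have e: "summable e" "suminf e = K * R" "(\<Sum>k. e (k + n)) = K * R / 2 ^ n"
    using e_sums[of 0] e_sums[of n] by (auto simp: sums_iff)
  have S_eq: "(\<Sum>i0. 1 / 2 ^ (i0 + 1) * deriv m (\<omega> / 2 ^ (i0 + 1)) *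
            (\<Prod>i. if i = i0 then 1 else m (\<omega> / 2 ^ (i + 1))))
      = (\<Sum>i. 1 / 2 ^ (i + 1) * m' (\<omega> / 2 ^ (i + 1)) * prodinf (G i))"
    unfolding G_def deriv_m ..
  have D_eq: "deriv (\<lambda>x. \<Prod>j=1..n. m (x / 2 ^ j)) \<omega>
      = (\<Sum>i<n. 1 / 2 ^ (i + 1) * m' (\<omega> / 2 ^ (i + 1)) * (\<Prod>k<n. G i k))"
    unfolding G_def by (rule DERIV_imp_deriv[OF has_real_derivative_dilated_prod[OF d]])
  have "\<bar>(\<Sum>i. 1 / 2 ^ (i + 1) * m' (\<omega> / 2 ^ (i + 1)) * prodinf (G i))
      - (\<Sum>i<n. 1 / 2 ^ (i + 1) * m' (\<omega> / 2 ^ (i + 1)) * (\<Prod>k<n. G i k))\<bar>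
      \<le> K * exp (K * R) / 2 ^ n + K * (exp (K * R) * (exp (K * R / 2 ^ n) - 1))"
  proof (rule dyadic_series_approx)
    show "\<bar>1 / 2 ^ (i + 1) * m' (\<omega> / 2 ^ (i + 1))\<bar> \<le> K / 2 ^ (i + 1)" for i
      using divide_right_mono[OF K[OF abs_dilate_le(2)[OF \<omega>, of "i + 1"]], of "2 ^ (i + 1)"] by (simp add: abs_mult)
    show "\<bar>prodinf (G i)\<bar> \<le> exp (K * R)" for i
      using abs_prodinf_le[OF G[of i] e(1)] e(2) by simp
    show "\<bar>prodinf (G i) - (\<Prod>k<n. G i k)\<bar> \<le> exp (K * R) * (exp (K * R / 2 ^ n) - 1)" for i
      using abs_prodinf_minus_prod_le[OF G[of i] e(1), of n] e(2,3) by simp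
  qed
  then show ?thesis
    unfolding S_eq D_eq .
qed

lemma tendsto_SUP_abs_zero:
  fixes F :: "nat \<Rightarrow> 'a \<Rightarrow> real"
  assumes "S \<noteq> {}" "\<And>n x. x \<in> S \<Longrightarrow> \<bar>F n x\<bar> \<le> \<beta> n" "\<beta> \<longlonglongrightarrow> 0"
  shows "(\<lambda>n. SUP x\<in>S. \<bar>F n x\<bar>) \<longlonglongrightarrow> 0"
proof (rule Lim_null_comparison[OF _ assms(3)])
  obtain x0 where x0: "x0 \<in> S"
    using assms(1) by blast
  have "bdd_above ((\<lambda>x. \<bar>F n x\<bar>) ` S)" for n
    using assms(2) by (intro bdd_aboveI2)
  then have "0 \<le> (SUP x\<in>S. \<bar>F n x\<bar>)" "(SUP x\<in>S. \<bar>F n x\<bar>) \<le> \<beta> n" for n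
    using x0 assms(1,2) by (auto intro: cSUP_upper2 cSUP_least)
  then show "\<forall>\<^sub>F n in sequentially. norm (SUP x\<in>S. \<bar>F n x\<bar>) \<le> \<beta> n"
    by simp
qed

definition C1 :: "(real \<Rightarrow> real) \<Rightarrow> bool" where
  "C1 f \<longleftrightarrow> (\<exists>f'. (\<forall>x. (f has_real_derivative f' x) (at x)) \<and> continuous_on UNIV f')"

lemma C1I:
  assumes "\<And>x. (f has_real_derivative f' x) (at x)" "continuous_on UNIV f'"
  shows "C1 f"
  using assms unfolding C1_def by blast

lemma C1_imp_continuous_on: "C1 f \<Longrightarrow> continuous_on UNIV f"
  unfolding C1_def by (meson DERIV_isCont continuous_at_imp_continuous_on)

lemma C1_mult:
  assumes "C1 f" "C1 g"
  shows "C1 (\<lambda>x. f x * g x)"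
proof -
  obtain f' g' where f: "\<And>x. (f has_real_derivative f' x) (at x)" "continuous_on UNIV f'"
    and g: "\<And>x. (g has_real_derivative g' x) (at x)" "continuous_on UNIV g'"
    using assms unfolding C1_def by blast
  show ?thesis
  proof (rule C1I)
    show "((\<lambda>x. f x * g x) has_real_derivative f' x * g x + g' x * f x) (at x)" for x
      by (rule DERIV_mult[OF f(1) g(1)])
    show "continuous_on UNIV (\<lambda>x. f' x * g x + g' x * f x)"
      using f(2) g(2) C1_imp_continuous_on[OF assms(1)] C1_imp_continuous_on[OF assms(2)]
      by (intro continuous_intros)
  qed
qed

lemma C1_divide_const:
  assumes "C1 f"
  shows "C1 (\<lambda>x. f x / c)"
proof -
  obtain f' where "\<And>x. (f has_real_derivative f' x) (at x)" "continuous_on UNIV f'"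
    using assms unfolding C1_def by blast
  then show ?thesis
    unfolding divide_inverse
    by (intro C1I[where f' = "\<lambda>x. f' x * inverse c"] DERIV_cmult_right continuous_intros)
qed

lemma C1_cos_half_power: "C1 (\<lambda>x. cos (x / 2) ^ k)"
  by (rule C1I[where f' = "\<lambda>x. real k * cos (x / 2) ^ (k - 1) * (- sin (x / 2) / 2)"])
    (auto intro!: derivative_eq_intros continuous_intros)

lemma C1_usum: "C1 (usum lam n f)"
  unfolding usum_def[abs_def]
  by (rule C1I[where f' = "\<lambda>x. \<Sum>k=1..n. lam n k * (fa f k * (- sin (real k * x) * real k)
      + fb f k * (cos (real k * x) * real k))"])
    (auto intro!: derivative_eq_intros continuous_intros simp: algebra_simps)

lemma C1_ml: "C1 (ml \<theta> \<omega>0 lam nl l)"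
  unfolding ml_def[abs_def] ul_def
  by (intro C1_divide_const C1_mult C1_cos_half_power C1_usum)

lemma ml_at_0: "ul \<theta> \<omega>0 lam nl l 0 \<noteq> 0 \<Longrightarrow> ml \<theta> \<omega>0 lam nl l 0 = 1"
  by (simp add: ml_def)

lemma tendsto_SUP_dilated_product_deriv:
  fixes m :: "real \<Rightarrow> real"
  assumes m: "C1 m" and m0: "m 0 = 1" and ab: "a \<le> b"
  shows "(\<lambda>n. SUP \<omega>\<in>{a..b}. \<bar>(\<Sum>i0. 1 / 2 ^ (i0 + 1) * deriv m (\<omega> / 2 ^ (i0 + 1)) *
            (\<Prod>i. if i = i0 then 1 else m (\<omega> / 2 ^ (i + 1))))
          - deriv (\<lambda>x. \<Prod>j=1..n. m (x / 2 ^ j)) \<omega>\<bar>) \<longlonglongrightarrow> 0"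
proof -
  obtain m' where d: "\<And>x. (m has_real_derivative m' x) (at x)" and cont: "continuous_on UNIV m'"
    using m unfolding C1_def by blast
  define R where "R = \<bar>a\<bar> + \<bar>b\<bar>"
  have "bounded (m' ` {-R..R})"
    by (intro compact_imp_bounded compact_continuous_image continuous_on_subset[OF cont]) auto
  then obtain K where "\<And>x. x \<in> {-R..R} \<Longrightarrow> \<bar>m' x\<bar> \<le> K"
    unfolding bounded_iff real_norm_def by blast
  then have K: "\<bar>m' x\<bar> \<le> K" if "\<bar>x\<bar> \<le> R" for x
    using that by (simp add: abs_le_iff)
  show ?thesis
  proof (rule tendsto_SUP_abs_zero)
    show "{a..b} \<noteq> {}"
      using ab by simp
    show "\<bar>(\<Sum>i0. 1 / 2 ^ (i0 + 1) * deriv m (\<omega> / 2 ^ (i0 + 1)) *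
            (\<Prod>i. if i = i0 then 1 else m (\<omega> / 2 ^ (i + 1))))
          - deriv (\<lambda>x. \<Prod>j=1..n. m (x / 2 ^ j)) \<omega>\<bar>
        \<le> K * exp (K * R) / 2 ^ n + K * (exp (K * R) * (exp (K * R / 2 ^ n) - 1))"
      if "\<omega> \<in> {a..b}" for n \<omega>
      using that by (intro dilated_product_deriv_estimate[OF d m0 K]) (auto simp: R_def)
    have "(\<lambda>n. K * exp (K * R) / 2 ^ n + K * (exp (K * R) * (exp (K * R / 2 ^ n) - 1)))
        \<longlonglongrightarrow> 0 + K * (exp (K * R) * (exp 0 - 1))"
      by (intro tendsto_intros LIMSEQ_divide_realpow_zero) simp_all
    then show "(\<lambda>n. K * exp (K * R) / 2 ^ n + K * (exp (K * R) * (exp (K * R / 2 ^ n) - 1))) \<longlonglongrightarrow> 0"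
      by simp
  qed
qed

theorem lemma11:
  fixes \<theta> :: "real \<Rightarrow> real" and \<omega>0 :: real
    and lam :: "nat \<Rightarrow> nat \<Rightarrow> real" and nl :: "nat \<Rightarrow> nat"
    and l0 l :: nat and a b :: real
  assumes odd: "\<forall>x. \<theta> (- x) = - \<theta> x"
    and mono: "mono \<theta>"
    and C2: "C2 \<theta>"
    and flat: "\<forall>x. x > pi / 3 \<longrightarrow> \<theta> x = pi / 4"
    and w0: "pi / 3 \<le> \<omega>0" "\<omega>0 < pi / 2"
    and approx0: "(\<lambda>l. real l * supC (\<lambda>\<omega>. ul \<theta> \<omega>0 lam nl l \<omega> - mMl \<theta> \<omega>0 l \<omega>))
                    \<longlonglongrightarrow> 0"
    and approx1: "(\<lambda>l. supC (\<lambda>\<omega>. u1l \<theta> \<omega>0 lam nl l \<omega> - deriv (mMl \<theta> \<omega>0 l) \<omega>))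
                    \<longlonglongrightarrow> 0"
    and upi: "\<forall>l. ul \<theta> \<omega>0 lam nl l pi \<noteq> 0"
    and u0: "\<exists>c>0. \<forall>l\<ge>l0. \<bar>ul \<theta> \<omega>0 lam nl l 0\<bar> \<ge> c"
    and l: "l \<ge> l0"
    and ab: "a < b"
  shows "(\<lambda>n. SUP \<omega>\<in>{a..b}. \<bar>Sl \<theta> \<omega>0 lam nl l \<omega>
              - deriv (\<lambda>x. \<Prod>j=1..n. ml \<theta> \<omega>0 lam nl l (x / 2 ^ j)) \<omega>\<bar>) \<longlonglongrightarrow> 0"
proof -
  have "ul \<theta> \<omega>0 lam nl l 0 \<noteq> 0"
    using u0 l by force
  then have "ml \<theta> \<omega>0 lam nl l 0 = 1"
    by (rule ml_at_0)
  then show ?thesis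
    unfolding Sl_def using ab by (intro tendsto_SUP_dilated_product_deriv C1_ml) auto
qed

end
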